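(* Let $(v,b)$ satisfy (C2), with associated pair $(\lambda,\varepsilon)$. Let $\mu=v/2$ if $\varepsilon\equiv v/2\pmod 2$ and $\mu=v/2+1$ otherwise. Then every TS$(v;b)$ $(V,\mathcal F)$ satisfies $$\sum_{\{x,y\}\in\binom V2}\lambda_{x,y}^2\ \ge\ \binom v2\lambda^2+2\varepsilon\lambda+\mu,$$ and equality holds for any TS$(v;b)$ in which all $\lambda_{x,y}\in\{\lambda-1,\lambda,\lambda+1\}$ and whose defect graph is isomorphic to $H^0_{v,\varepsilon}$ (when $\varepsilon\equiv v/2\pmod2$) or to one of $H^1_{v,\varepsilon},H^2_{v,\varepsilon},H^3_{v,\varepsilon},H^4_{v,\varepsilon}$ (when $\varepsilon\not\equiv v/2\pmod 2$).
   Context: A triple system TS$(v;b)$ is a pair $(V,\mathcal F)$ where $V$ is a set of $v\ge 3$ points and $\mathcal F$ is a multiset of $b$ 3-subsets of $V$ (blocks); repeated blocks allowed. $\lambda_{x,y}$ is the number of blocks (with multiplicity) containing $\{x,y\}$. The associated pair $(\lambda,\varepsilon)$ of $(v,b)$: integers with $3b=\lambda\binom v2+\varepsilon$, $-v/2<\varepsilon<v/2$. (C2): $v$ even and $\lambda v(v-1)/6-v/6<b<\lambda v(v-1)/6+v/6$ for an odd integer $\lambda$ (this is the $\lambda$ of the associated pair). Defect graph: if all $\lambda_{x,y}\in\{\lambda-1,\lambda,\lambda+1\}$, the defect graph is the graph on $V$ with edges $\{x,y\}$ with $\lambda_{x,y}=\lambda+1$ (labelled $+1$) and with $\lambda_{x,y}=\lambda-1$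 (labelled $-1$); isomorphisms preserve labels. $H^0_{v,\varepsilon}$: perfect matching of $V$ with $(v+2\varepsilon)/4$ edges $+1$ and $(v-2\varepsilon)/4$ edges $-1$. For $1\le i\le 4$, $H^i_{v,\varepsilon}$ is the vertex-disjoint union of a star $K_{1,3}$ and a matching covering the remaining $v-4$ vertices, where: $H^1$: star with two $+1$ and one $-1$ edge, matching with $(v-6+2\varepsilon)/4$ edges $+1$ and $(v-2-2\varepsilon)/4$ edges $-1$; $H^2$: star with one $+1$ and two $-1$ edges, matching with $(v-2+2\varepsilon)/4$ edges $+1$ and $(v-6-2\varepsilon)/4$ edges $-1$; $H^3$: star with three $+1$ edges, matching with $(v-10+2\varepsilon)/4$ edges $+1$ and $(v+2-2\varepsilon)/4$ edges $-1$; $H^4$: star with three $-1$ edges, matching with $(v+2+2\varepsilon)/4$ edges $+1$ and $(v-10-2\varepsilon)/4$ edges $-1$. *)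

theory Defs
  imports Main "HOL-Library.Multiset"
begin

definition pairs :: "'a set \<Rightarrow> 'a set set" where
  "pairs V = {e. e \<subseteq> V \<and> card e = 2}"

text \<open>A triple system TS(v;b) on V: a finite multiset of 3-subsets (blocks); b = size F.\<close>
definition is_TS :: "'a set \<Rightarrow> 'a set multiset \<Rightarrow> bool" where
  "is_TS V F \<longleftrightarrow> finite V \<and> card V \<ge> 3 \<and> (\<forall>B\<in>#F. B \<subseteq> V \<and> card B = 3)"

definition lamP :: "'a set multiset \<Rightarrow> 'a set \<Rightarrow> nat" where
  "lamP F e = size (filter_mset (\<lambda>B. e \<subseteq> B) F)"

definition assoc_pair :: "nat \<Rightarrow> nat \<Rightarrow> int \<Rightarrow> int \<Rightarrow> bool" where
  "assoc_pair v b lam eps \<longleftrightarrow>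
     3 * int b = lam * int (v choose 2) + eps \<and> - int v < 2 * eps \<and> 2 * eps < int v"

text \<open>Condition (C2): v even and lambda v(v-1)/6 - v/6 < b < lambda v(v-1)/6 + v/6
  for an odd integer lambda (multiplied through by 6).\<close>
definition C2 :: "nat \<Rightarrow> nat \<Rightarrow> bool" where
  "C2 v b \<longleftrightarrow> even v \<and> (\<exists>lam::int. odd lam \<and>
      lam * int v * (int v - 1) - int v < 6 * int b \<and>
      6 * int b < lam * int v * (int v - 1) + int v)"

text \<open>Labelled graphs on V are functions on 2-subsets with values in {-1,0,1};
  value 0 means "no edge".  Isomorphism: a bijection of V preserving labels.\<close>
definition lg_iso :: "'a set \<Rightarrow> ('a set \<Rightarrow> int) \<Rightarrow> ('a set \<Rightarrow> int) \<Rightarrow> bool" where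
  "lg_iso V G H \<longleftrightarrow> (\<exists>\<sigma>. bij_betw \<sigma> V V \<and> (\<forall>e\<in>pairs V. G e = H (\<sigma> ` e)))"

definition defect :: "'a set multiset \<Rightarrow> int \<Rightarrow> 'a set \<Rightarrow> int" where
  "defect F lam e = int (lamP F e) - lam"

definition is_labgraph :: "'a set \<Rightarrow> ('a set \<Rightarrow> int) \<Rightarrow> bool" where
  "is_labgraph V H \<longleftrightarrow> (\<forall>e\<in>pairs V. H e \<in> {-1, 0, 1})"

definition is_H0 :: "'a set \<Rightarrow> int \<Rightarrow> ('a set \<Rightarrow> int) \<Rightarrow> bool" where
  "is_H0 V eps H \<longleftrightarrow> is_labgraph V H \<and>
     (\<forall>x\<in>V. \<exists>!e. e \<in> pairs V \<and> H e \<noteq> 0 \<and> x \<in> e) \<and>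
     4 * int (card {e\<in>pairs V. H e = 1}) = int (card V) + 2 * eps \<and>
     4 * int (card {e\<in>pairs V. H e = -1}) = int (card V) - 2 * eps"

text \<open>Vertex-disjoint union of a star K_{1,3} (centre c, leaves A) with p edges +1 and
  m edges -1, and a perfect matching of the remaining v-4 vertices with pM4/4 edges +1
  and mM4/4 edges -1.\<close>
definition is_Hstar :: "'a set \<Rightarrow> nat \<Rightarrow> nat \<Rightarrow> int \<Rightarrow> int \<Rightarrow> ('a set \<Rightarrow> int) \<Rightarrow> bool" where
  "is_Hstar V p m pM4 mM4 H \<longleftrightarrow> is_labgraph V H \<and>
     (\<exists>c A. c \<in> V \<and> A \<subseteq> V \<and> c \<notin> A \<and> card A = 3 \<and>
        (\<forall>a\<in>A. H {c, a} \<noteq> 0) \<and>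
        card {a\<in>A. H {c, a} = 1} = p \<and> card {a\<in>A. H {c, a} = -1} = m \<and>
        (\<forall>e\<in>pairs V. H e \<noteq> 0 \<and> e \<inter> insert c A \<noteq> {} \<longrightarrow> (\<exists>a\<in>A. e = {c, a})) \<and>
        (\<forall>x\<in>V - insert c A. \<exists>!e. e \<in> pairs V \<and> H e \<noteq> 0 \<and> x \<in> e) \<and>
        4 * int (card {e\<in>pairs (V - insert c A). H e = 1}) = pM4 \<and>
        4 * int (card {e\<in>pairs (V - insert c A). H e = -1}) = mM4)"

definition is_H1 :: "'a set \<Rightarrow> int \<Rightarrow> ('a set \<Rightarrow> int) \<Rightarrow> bool" where
  "is_H1 V eps H = is_Hstar V 2 1 (int (card V) - 6 + 2 * eps) (int (card V) - 2 - 2 * eps) H"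
definition is_H2 :: "'a set \<Rightarrow> int \<Rightarrow> ('a set \<Rightarrow> int) \<Rightarrow> bool" where
  "is_H2 V eps H = is_Hstar V 1 2 (int (card V) - 2 + 2 * eps) (int (card V) - 6 - 2 * eps) H"
definition is_H3 :: "'a set \<Rightarrow> int \<Rightarrow> ('a set \<Rightarrow> int) \<Rightarrow> bool" where
  "is_H3 V eps H = is_Hstar V 3 0 (int (card V) - 10 + 2 * eps) (int (card V) + 2 - 2 * eps) H"
definition is_H4 :: "'a set \<Rightarrow> int \<Rightarrow> ('a set \<Rightarrow> int) \<Rightarrow> bool" where
  "is_H4 V eps H = is_Hstar V 0 3 (int (card V) + 2 + 2 * eps) (int (card V) - 10 - 2 * eps) H"

end

theory Submission
  imports Defs
begin

text \<open>Write lambda_e = lambda + d_e. Since the d_e sum to eps, the sum of the squares lambda_e^2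
  exceeds C(v,2) lambda^2 + 2 eps lambda by exactly the sum of the d_e^2, which has the parity of
  eps. At every vertex x the d_e on the v - 1 pairs through x add up to 2 r_x - (v - 1) lambda,
  which is odd because v is even and lambda is odd; so the pairs with odd d_e cover V, there are
  at least v/2 of them, and the sum of the d_e^2 is at least v/2, hence at least mu by parity.
  When all |d_e| <= 1 this sum is the number of edges of the defect graph, which is v/2 for H^0
  and v/2 + 1 for H^1, ..., H^4.\<close>

lemma finite_pairs: "finite V \<Longrightarrow> finite (pairs V)"
  unfolding pairs_def by (rule finite_subset[of _ "Pow V"]) auto

lemma card_pairs: "finite V \<Longrightarrow> card (pairs V) = card V choose 2"
  unfolding pairs_def using n_subsets by blast

lemma pairs_containing: "x \<in> S \<Longrightarrow> {e\<in>pairs S. x \<in> e} = (\<lambda>y. {x, y}) ` (S - {x})"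
  by (auto simp: pairs_def card_2_iff doubleton_eq_iff insert_commute)

lemma card_pairs_containing:
  assumes "finite S" "x \<in> S"
  shows "card {e\<in>pairs S. x \<in> e} = card S - 1"
proof -
  have "inj_on (\<lambda>y. {x, y}) (S - {x})"
    by (auto simp: inj_on_def doubleton_eq_iff)
  then show ?thesis
    using assms by (simp add: pairs_containing card_image)
qed

lemma bij_betw_image_pairs:
  assumes "bij_betw \<sigma> U V"
  shows "bij_betw ((`) \<sigma>) (pairs U) (pairs V)"
proof (rule bij_betw_subset[OF bij_betw_Pow[OF assms]])
  have card_image: "card (\<sigma> ` e) = card e" if "e \<subseteq> U" for e
    using assms that by (meson bij_betw_imp_inj_on card_image inj_on_subset)
  show "pairs U \<subseteq> Pow U" by (auto simp: pairs_def)
  show "(`) \<sigma> ` pairs U = pairs V"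
  proof
    show "(`) \<sigma> ` pairs U \<subseteq> pairs V"
      using assms card_image by (auto simp: pairs_def bij_betw_def)
    show "pairs V \<subseteq> (`) \<sigma> ` pairs U"
    proof
      fix e' assume e': "e' \<in> pairs V"
      have "e' \<in> (`) \<sigma> ` Pow U"
        using e' bij_betw_Pow[OF assms] by (auto simp: pairs_def bij_betw_def)
      then obtain e where "e \<subseteq> U" "e' = \<sigma> ` e" by auto
      then show "e' \<in> (`) \<sigma> ` pairs U"
        using e' card_image by (auto simp: pairs_def)
    qed
  qed
qed

lemma lamP_add_mset: "lamP (add_mset B F) e = (if e \<subseteq> B then 1 else 0) + lamP F e"
  by (simp add: lamP_def)

lemma sum_lamP_eq_sum_mset_card:
  assumes "finite Q"
  shows "(\<Sum>e\<in>Q. lamP F e) = (\<Sum>B\<in>#F. card {e\<in>Q. e \<subseteq> B})"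
proof (induction F)
  case empty
  then show ?case by (simp add: lamP_def)
next
  case (add B F)
  have "(\<Sum>e\<in>Q. lamP (add_mset B F) e) = (\<Sum>e\<in>Q. if e \<subseteq> B then 1 else 0) + (\<Sum>e\<in>Q. lamP F e)"
    by (simp add: lamP_add_mset sum.distrib)
  also have "(\<Sum>e\<in>Q. if e \<subseteq> B then 1 else 0) = card {e\<in>Q. e \<subseteq> B}"
    using assms by (simp add: sum.If_cases Int_def)
  finally show ?case using add.IH by simp
qed

lemma is_TS_block: "is_TS V F \<Longrightarrow> B \<in># F \<Longrightarrow> B \<subseteq> V \<and> finite B \<and> card B = 3"
  unfolding is_TS_def by (metis card.infinite zero_neq_numeral)

lemma sum_lamP_pairs:
  assumes "is_TS V F"
  shows "(\<Sum>e\<in>pairs V. lamP F e) = 3 * size F"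
proof -
  have "card {e\<in>pairs V. e \<subseteq> B} = 3" if "B \<in># F" for B
  proof -
    have "{e\<in>pairs V. e \<subseteq> B} = pairs B"
      using is_TS_block[OF assms that] by (auto simp: pairs_def)
    then show ?thesis
      using is_TS_block[OF assms that] by (simp add: card_pairs choose_two)
  qed
  then show ?thesis
    using assms by (simp add: sum_lamP_eq_sum_mset_card finite_pairs is_TS_def cong: image_mset_cong)
qed

lemma sum_lamP_pairs_containing:
  assumes "is_TS V F" "x \<in> V"
  shows "(\<Sum>e\<in>{e\<in>pairs V. x \<in> e}. lamP F e) = 2 * size {#B\<in>#F. x \<in> B#}"
proof -
  have "card {e\<in>{e\<in>pairs V. x \<in> e}. e \<subseteq> B} = (if x \<in> B then 2 else 0)" if "B \<in># F" for B
  proof (cases "x \<in> B")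
    case True
    have "{e\<in>{e\<in>pairs V. x \<in> e}. e \<subseteq> B} = {e\<in>pairs B. x \<in> e}"
      using is_TS_block[OF assms(1) that] by (auto simp: pairs_def)
    then show ?thesis
      using True is_TS_block[OF assms(1) that] by (simp add: card_pairs_containing)
  next
    case False
    then have "{e\<in>{e\<in>pairs V. x \<in> e}. e \<subseteq> B} = {}" by auto
    then show ?thesis using False by (simp only: card.empty if_False)
  qed
  then have "(\<Sum>e\<in>{e\<in>pairs V. x \<in> e}. lamP F e) = (\<Sum>B\<in>#F. if x \<in> B then 2 else 0)"
    using assms by (simp add: sum_lamP_eq_sum_mset_card finite_pairs is_TS_def cong: image_mset_cong)
  also have "\<dots> = 2 * size {#B\<in>#F. x \<in> B#}"
    by (induction F) auto
  finally show ?thesis .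
qed

definition lg_edges :: "'a set \<Rightarrow> ('a set \<Rightarrow> int) \<Rightarrow> 'a set set" where
  "lg_edges V H = {e\<in>pairs V. H e \<noteq> 0}"

lemma lg_iso_card_edges:
  assumes "lg_iso V G H"
  shows "card (lg_edges V G) = card (lg_edges V H)"
proof -
  obtain \<sigma> where \<sigma>: "bij_betw \<sigma> V V" and GH: "\<forall>e\<in>pairs V. G e = H (\<sigma> ` e)"
    using assms by (auto simp: lg_iso_def)
  have bij: "bij_betw ((`) \<sigma>) (pairs V) (pairs V)"
    using bij_betw_image_pairs[OF \<sigma>] .
  have "bij_betw ((`) \<sigma>) (lg_edges V G) (lg_edges V H)"
  proof (rule bij_betw_subset[OF bij])
    show "lg_edges V G \<subseteq> pairs V" by (auto simp: lg_edges_def)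
    show "(`) \<sigma> ` lg_edges V G = lg_edges V H"
    proof
      show "(`) \<sigma> ` lg_edges V G \<subseteq> lg_edges V H"
        using bij GH by (auto simp: lg_edges_def bij_betw_def)
      show "lg_edges V H \<subseteq> (`) \<sigma> ` lg_edges V G"
      proof
        fix e' assume e': "e' \<in> lg_edges V H"
        have "e' \<in> (`) \<sigma> ` pairs V"
          using bij e' by (auto simp: lg_edges_def bij_betw_def)
        then obtain e where "e \<in> pairs V" "e' = \<sigma> ` e" by blast
        then show "e' \<in> (`) \<sigma> ` lg_edges V G"
          using e' GH by (auto simp: lg_edges_def)
      qed
    qed
  qed
  then show ?thesis by (rule bij_betw_same_card)
qed

lemma card_lg_edges_labgraph:
  assumes "is_labgraph V H" "U \<subseteq> V" "finite U"
  shows "card (lg_edges U H) = card {e\<in>pairs U. H e = 1} + card {e\<in>pairs U. H e = -1}"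
proof -
  have "lg_edges U H = {e\<in>pairs U. H e = 1} \<union> {e\<in>pairs U. H e = -1}"
    using assms by (auto simp: lg_edges_def is_labgraph_def pairs_def)
  then show ?thesis
    using assms(3) by (simp add: card_Un_disjoint finite_pairs disjoint_iff)
qed

lemma card_lg_edges_H0:
  assumes "finite V" "is_H0 V eps H"
  shows "2 * int (card (lg_edges V H)) = int (card V)"
  using assms card_lg_edges_labgraph[of V H V] unfolding is_H0_def by auto

lemma card_lg_edges_Hstar:
  assumes "finite V" "is_Hstar V p m pM4 mM4 H"
  shows "4 * int (card (lg_edges V H)) = 12 + pM4 + mM4"
proof -
  obtain c A where c: "c \<in> V" "A \<subseteq> V" "c \<notin> A" "card A = 3"
    and star: "\<forall>a\<in>A. H {c, a} \<noteq> 0"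
    and only_star: "\<forall>e\<in>pairs V. H e \<noteq> 0 \<and> e \<inter> insert c A \<noteq> {} \<longrightarrow> (\<exists>a\<in>A. e = {c, a})"
    and plus: "4 * int (card {e\<in>pairs (V - insert c A). H e = 1}) = pM4"
    and minus: "4 * int (card {e\<in>pairs (V - insert c A). H e = -1}) = mM4"
    using assms(2) unfolding is_Hstar_def by blast
  define W where "W = V - insert c A"
  have "lg_edges V H = (\<lambda>a. {c, a}) ` A \<union> lg_edges W H"
  proof
    show "lg_edges V H \<subseteq> (\<lambda>a. {c, a}) ` A \<union> lg_edges W H"
    proof
      fix e assume e: "e \<in> lg_edges V H"
      show "e \<in> (\<lambda>a. {c, a}) ` A \<union> lg_edges W H"
      proof (cases "e \<inter> insert c A = {}")
        case True
        then show ?thesis using e by (auto simp: lg_edges_def pairs_def W_def)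
      next
        case False
        then show ?thesis using e only_star by (auto simp: lg_edges_def)
      qed
    qed
    show "(\<lambda>a. {c, a}) ` A \<union> lg_edges W H \<subseteq> lg_edges V H"
      using c star by (auto simp: lg_edges_def pairs_def W_def card_insert_if)
  qed
  moreover have "(\<lambda>a. {c, a}) ` A \<inter> lg_edges W H = {}"
    by (auto simp: lg_edges_def pairs_def W_def)
  moreover have "card ((\<lambda>a. {c, a}) ` A) = 3"
    using c by (subst card_image) (auto simp: inj_on_def doubleton_eq_iff)
  moreover have "finite (lg_edges W H)"
    using assms(1) by (simp add: lg_edges_def W_def finite_pairs)
  moreover have "finite A"
    using c(4) by (metis card.infinite zero_neq_numeral)
  ultimately have "card (lg_edges V H) = 3 + card (lg_edges W H)"
    by (simp add: card_Un_disjoint)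
  moreover have "card (lg_edges W H) = card {e\<in>pairs W. H e = 1} + card {e\<in>pairs W. H e = -1}"
    using assms card_lg_edges_labgraph[of V H W] by (auto simp: is_Hstar_def W_def)
  ultimately show ?thesis using plus minus unfolding W_def by simp
qed

lemma card_lg_edges_H1234:
  assumes "finite V" "is_H1 V eps H \<or> is_H2 V eps H \<or> is_H3 V eps H \<or> is_H4 V eps H"
  shows "4 * int (card (lg_edges V H)) = 2 * int (card V) + 4"
  using assms(2) card_lg_edges_Hstar[OF assms(1)]
  unfolding is_H1_def is_H2_def is_H3_def is_H4_def by force

lemma two_times_choose_two: "2 * int (n choose 2) = int n * (int n - 1)"
proof (induction n)
  case (Suc n)
  then show ?case by (simp add: numeral_2_eq_2 algebra_simps)
qed simp

text \<open>Both lambda v(v-1) and the odd lambda' v(v-1) of (C2) lie within v of 6b, and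
  v(v-1) >= 2v, so they coincide.\<close>
lemma C2_assoc_pair_odd_lambda:
  assumes "C2 v b" "assoc_pair v b lam eps" "3 \<le> v"
  shows "odd lam"
proof -
  define w where "w = int v * (int v - 1)"
  obtain lam' where "odd lam'" and lam': "lam' * w - int v < 6 * int b" "6 * int b < lam' * w + int v"
    using assms(1) unfolding C2_def w_def by (auto simp: mult.assoc)
  have ap: "3 * int b = lam * int (v choose 2) + eps" "- int v < 2 * eps" "2 * eps < int v"
    using assms(2) unfolding assoc_pair_def by auto
  have "6 * int b = lam * w + 2 * eps"
    using ap(1) unfolding w_def two_times_choose_two[symmetric] by (simp add: algebra_simps)
  then have close: "(lam' - lam) * w < 2 * int v" "(lam - lam') * w < 2 * int v"
    using lam' ap(2,3) by (simp_all add: left_diff_distrib)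
  have "int v * 2 \<le> int v * (int v - 1)"
    using assms(3) by (intro mult_left_mono) auto
  then have w: "2 * int v \<le> w"
    unfolding w_def by simp
  have "lam' = lam"
  proof (rule ccontr)
    assume "lam' \<noteq> lam"
    then consider "1 \<le> lam' - lam" | "1 \<le> lam - lam'" by linarith
    then show False
    proof cases
      case 1
      then have "1 * w \<le> (lam' - lam) * w" using w by (intro mult_right_mono) auto
      then show False using close w by linarith
    next
      case 2
      then have "1 * w \<le> (lam - lam') * w" using w by (intro mult_right_mono) auto
      then show False using close w by linarith
    qed
  qed
  then show ?thesis using \<open>odd lam'\<close> by simp
qed

lemma card_nonzero_le_sum_squares:
  fixes f :: "'b \<Rightarrow> int"
  assumes "finite P"
  shows "int (card {e\<in>P. f e \<noteq> 0}) \<le> (\<Sum>e\<in>P. (f e)\<^sup>2)"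
proof -
  have "int (card {e\<in>P. f e \<noteq> 0}) = (\<Sum>e\<in>P. if f e \<noteq> 0 then 1 else 0)"
    using assms by (simp add: sum.inter_filter[symmetric])
  also have "\<dots> \<le> (\<Sum>e\<in>P. (f e)\<^sup>2)"
    by (rule sum_mono) (simp add: int_one_le_iff_zero_less)
  finally show ?thesis .
qed

lemma sum_squares_eq_card_nonzero:
  fixes f :: "'b \<Rightarrow> int"
  assumes "finite P" "\<forall>e\<in>P. f e \<in> {-1, 0, 1}"
  shows "(\<Sum>e\<in>P. (f e)\<^sup>2) = int (card {e\<in>P. f e \<noteq> 0})"
proof -
  have "(\<Sum>e\<in>P. (f e)\<^sup>2) = (\<Sum>e\<in>P. if f e \<noteq> 0 then 1 else 0)"
    using assms(2) by (intro sum.cong) auto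
  also have "\<dots> = int (card {e\<in>P. f e \<noteq> 0})"
    using assms(1) by (simp add: sum.inter_filter[symmetric])
  finally show ?thesis .
qed

lemma even_sum_squares_minus_sum:
  fixes f :: "'b \<Rightarrow> int"
  shows "even ((\<Sum>e\<in>P. (f e)\<^sup>2) - (\<Sum>e\<in>P. f e))"
  by (simp add: sum_subtractf[symmetric] power2_eq_square dvd_sum)

lemma card_le_twice_card_pair_cover:
  assumes "finite V" "Q \<subseteq> pairs V" "\<forall>x\<in>V. \<exists>e\<in>Q. x \<in> e"
  shows "card V \<le> 2 * card Q"
proof -
  have "V = \<Union>Q"
    using assms(2,3) by (auto simp: pairs_def)
  then have "card V \<le> sum card Q"
    by (simp add: card_Union_le_sum_card)
  also have "sum card Q = 2 * card Q"
    using assms(2) by (simp add: pairs_def subset_iff)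
  finally show ?thesis .
qed

lemma sum_defect:
  assumes "is_TS V F" "assoc_pair (card V) (size F) lam eps"
  shows "(\<Sum>e\<in>pairs V. defect F lam e) = eps"
proof -
  have "(\<Sum>e\<in>pairs V. defect F lam e) = int (\<Sum>e\<in>pairs V. lamP F e) - int (card (pairs V)) * lam"
    by (simp add: defect_def sum_subtractf)
  also have "\<dots> = 3 * int (size F) - int (card V choose 2) * lam"
    using assms(1) by (simp add: sum_lamP_pairs card_pairs is_TS_def)
  finally show ?thesis
    using assms(2) by (simp add: assoc_pair_def)
qed

lemma sum_lamP_squares:
  assumes "is_TS V F" "assoc_pair (card V) (size F) lam eps"
  shows "(\<Sum>e\<in>pairs V. (int (lamP F e))\<^sup>2)
           = int (card V choose 2) * lam\<^sup>2 + 2 * eps * lam + (\<Sum>e\<in>pairs V. (defect F lam e)\<^sup>2)"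
proof -
  have "(\<Sum>e\<in>pairs V. (int (lamP F e))\<^sup>2) = (\<Sum>e\<in>pairs V. lam\<^sup>2 + 2 * lam * defect F lam e + (defect F lam e)\<^sup>2)"
    by (intro sum.cong) (auto simp: defect_def power2_eq_square algebra_simps)
  also have "\<dots> = int (card (pairs V)) * lam\<^sup>2 + 2 * lam * (\<Sum>e\<in>pairs V. defect F lam e)
                    + (\<Sum>e\<in>pairs V. (defect F lam e)\<^sup>2)"
    by (simp add: sum.distrib sum_distrib_left)
  finally show ?thesis
    using assms by (simp add: sum_defect card_pairs is_TS_def algebra_simps)
qed

text \<open>The defects at a vertex x sum to 2 r_x - (v - 1) lambda, where r_x counts the blocks
  through x; for v even and lambda odd this is odd.\<close>
lemma odd_defect_at_vertex:
  assumes "is_TS V F" "even (card V)" "odd lam" "x \<in> V"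
  shows "\<exists>e\<in>pairs V. x \<in> e \<and> odd (defect F lam e)"
proof (rule ccontr)
  let ?T = "{e\<in>pairs V. x \<in> e}"
  assume "\<not> ?thesis"
  then have "even (\<Sum>e\<in>?T. defect F lam e)"
    by (auto intro: dvd_sum)
  moreover have "(\<Sum>e\<in>?T. defect F lam e) = int (\<Sum>e\<in>?T. lamP F e) - int (card ?T) * lam"
    by (simp add: defect_def sum_subtractf)
  moreover have "int (card ?T) = int (card V) - 1"
    using assms(1,4) card_pairs_containing[of V x] by (auto simp: is_TS_def of_nat_diff)
  moreover have "odd ((int (card V) - 1) * lam)"
    using assms(1-3) by (simp add: is_TS_def)
  ultimately show False
    using sum_lamP_pairs_containing[OF assms(1,4)] by simp
qed

definition defect_square_bound :: "nat \<Rightarrow> int \<Rightarrow> int" where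
  "defect_square_bound v eps =
     (if eps mod 2 = int v div 2 mod 2 then int v div 2 else int v div 2 + 1)"

lemma card_le_twice_sum_defect_squares:
  assumes "is_TS V F" "even (card V)" "odd lam"
  shows "int (card V) \<le> 2 * (\<Sum>e\<in>pairs V. (defect F lam e)\<^sup>2)"
proof -
  let ?d = "defect F lam"
  have fin: "finite V" using assms(1) by (simp add: is_TS_def)
  define Odd where "Odd = {e\<in>pairs V. odd (?d e)}"
  have "card V \<le> 2 * card Odd"
    using odd_defect_at_vertex[OF assms] fin
    by (intro card_le_twice_card_pair_cover) (auto simp: Odd_def)
  moreover have "card Odd \<le> card {e\<in>pairs V. ?d e \<noteq> 0}"
    using fin by (intro card_mono) (auto simp: Odd_def finite_pairs)
  moreover have "int (card {e\<in>pairs V. ?d e \<noteq> 0}) \<le> (\<Sum>e\<in>pairs V. (?d e)\<^sup>2)"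
    using card_nonzero_le_sum_squares finite_pairs fin .
  ultimately show ?thesis by linarith
qed

lemma defect_square_bound_le_sum_defect_squares:
  assumes "is_TS V F" "C2 (card V) (size F)" "assoc_pair (card V) (size F) lam eps"
  shows "defect_square_bound (card V) eps \<le> (\<Sum>e\<in>pairs V. (defect F lam e)\<^sup>2)"
proof -
  let ?S = "\<Sum>e\<in>pairs V. (defect F lam e)\<^sup>2"
  have "even (card V)" "3 \<le> card V"
    using assms(1,2) by (auto simp: is_TS_def C2_def)
  then have "int (card V) \<le> 2 * ?S"
    using card_le_twice_sum_defect_squares C2_assoc_pair_odd_lambda assms by blast
  moreover have "even (?S - eps)"
    using even_sum_squares_minus_sum[of "defect F lam"] sum_defect[OF assms(1,3)] by simp
  ultimately show ?thesis
    using \<open>even (card V)\<close> unfolding defect_square_bound_def by presburger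
qed

lemma sum_defect_squares_eq_defect_square_bound:
  assumes "finite V" "even (card V)"
    and small: "\<forall>e\<in>pairs V. int (lamP F e) \<in> {lam - 1, lam, lam + 1}"
    and iso: "if eps mod 2 = (int (card V) div 2) mod 2
          then (\<exists>H. is_H0 V eps H \<and> lg_iso V (defect F lam) H)
          else (\<exists>H. (is_H1 V eps H \<or> is_H2 V eps H \<or> is_H3 V eps H \<or> is_H4 V eps H)
                    \<and> lg_iso V (defect F lam) H)"
  shows "(\<Sum>e\<in>pairs V. (defect F lam e)\<^sup>2) = defect_square_bound (card V) eps"
proof -
  let ?d = "defect F lam"
  let ?S = "\<Sum>e\<in>pairs V. (?d e)\<^sup>2"
  have S: "?S = int (card (lg_edges V ?d))"
    using small assms(1) unfolding lg_edges_def
    by (intro sum_squares_eq_card_nonzero) (auto simp: defect_def finite_pairs)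
  have v: "int (card V) = 2 * (int (card V) div 2)"
    using assms(2) by simp
  show ?thesis
  proof (cases "eps mod 2 = (int (card V) div 2) mod 2")
    case True
    then obtain H where H: "is_H0 V eps H" "lg_iso V ?d H"
      using iso by auto
    have "2 * ?S = int (card V)"
      using S card_lg_edges_H0[OF assms(1) H(1)] lg_iso_card_edges[OF H(2)] by simp
    then show ?thesis
      using True v unfolding defect_square_bound_def by simp
  next
    case False
    then obtain H where H: "is_H1 V eps H \<or> is_H2 V eps H \<or> is_H3 V eps H \<or> is_H4 V eps H"
      "lg_iso V ?d H"
      using iso by auto
    have "4 * ?S = 2 * int (card V) + 4"
      using S card_lg_edges_H1234[OF assms(1) H(1)] lg_iso_card_edges[OF H(2)] by simp
    then show ?thesis
      using False v unfolding defect_square_bound_def by simp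
  qed
qed

theorem lemma2p2:
  fixes V :: "'a set" and F :: "'a set multiset" and b :: nat and lam eps :: int
  assumes "C2 (card V) b"
    and "assoc_pair (card V) b lam eps"
    and "is_TS V F" and "size F = b"
  defines "mu \<equiv> (if eps mod 2 = (int (card V) div 2) mod 2 then int (card V) div 2
                 else int (card V) div 2 + 1)"
  shows "(\<Sum>e\<in>pairs V. (int (lamP F e))\<^sup>2)
           \<ge> int (card V choose 2) * lam\<^sup>2 + 2 * eps * lam + mu
      \<and> ((\<forall>e\<in>pairs V. int (lamP F e) \<in> {lam - 1, lam, lam + 1}) \<and>
         (if eps mod 2 = (int (card V) div 2) mod 2
          then (\<exists>H. is_H0 V eps H \<and> lg_iso V (defect F lam) H)
          else (\<exists>H. (is_H1 V eps H \<or> is_H2 V eps H \<or> is_H3 V eps H \<or> is_H4 V eps H)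
                    \<and> lg_iso V (defect F lam) H))
         \<longrightarrow> (\<Sum>e\<in>pairs V. (int (lamP F e))\<^sup>2)
               = int (card V choose 2) * lam\<^sup>2 + 2 * eps * lam + mu)"
proof -
  have C2: "C2 (card V) (size F)" and ap: "assoc_pair (card V) (size F) lam eps"
    using assms(1,2,4) by simp_all
  have mu: "mu = defect_square_bound (card V) eps"
    unfolding mu_def defect_square_bound_def ..
  have "finite V" "even (card V)"
    using assms(1,3) by (auto simp: is_TS_def C2_def)
  note equality = sum_defect_squares_eq_defect_square_bound[OF this]
  note lower = defect_square_bound_le_sum_defect_squares[OF assms(3) C2 ap]
  show ?thesis
    unfolding sum_lamP_squares[OF assms(3) ap] mu
    by (intro conjI impI add_left_mono lower) (elim conjE; simp only: equality)
qed

end
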